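(* Let $xy$ be a heavy pair such that $y$ lies strictly above $r(x)$ on the path $\pi(s,u_{H_x})$ and the $T$-edge $(y,y_h)$ lies on $\pi_x(s,H_x)$. Let $\widehat C(x,y)=\bigcup\{C\in\mathcal{C}_x:(y,y_h)\in\pi_x(s,C)\}$. Then $G\setminus\{x,y\}$ is connected if and only if there is an edge of $G\setminus\{x,y\}$ with exactly one endpoint in $\widehat C(x,y)\cup H_y$.
   Context: $G=(V,E)$ is a connected graph with no cut vertex, $T$ a BFS tree rooted at $s$, $\pi(u,v)$ the $T$-path, $T_x$ the subtree at $x$, $V_x=V(T_x)\setminus\{x\}$. The heavy child $x_h$ of a non-leaf $x$ is its child with largest subtree (ties broken consistently). $\mathcal{C}_x$ is the set of components of $G[V_x]$, $C_{x,v}$ the one containing $v$, and $H_x=C_{x,x_h}$. For each $C\in\mathcal{C}_x$ a fixed edge $(u_C,v_C)\in E$ with $v_C\in C$, $u_C\notin V(T_x)$, and $\pi_x(s,C)=\pi(s,u_C)\circ(u_C,v_C)$. $R(x)=\{v\in V\setminus V(T_x):v\text{ has a neighbour in }H_x\}$ and $r(x)$ is the $T$-lowest common ancestor of $R(x)$. $x,y$ is independent if neither is a $T$-ancestor of the other. For independent $x,y$, $C\in\mathcal{C}_x$ is fully-$y$-sensitive if $y\in\pi_x(s,C)$ and $\pi_x(s,C)$ contains no $T$-edge $(y,y')$ with $x\notin\pi_y(s,C_{y,y'})$; $\mathcal{FS}(x,y)$ is the set of such components. $\langle x,y\rangle$ is an ordered light pair if some $C\in\mathcal{FS}(x,y)$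 has $(y,y_h)\notin\pi_x(s,C)$; an independent pair $xy$ is heavy if neither ordering is an ordered light pair. *)

theory Defs
  imports Main
begin

text \<open>Simple undirected graph: finite vertex set V, symmetric irreflexive
edge relation E on V.  The BFS tree T rooted at s is given by a parent
function p (with the normalisation p s = s).\<close>

definition simple_graph :: "'a set \<Rightarrow> ('a \<Rightarrow> 'a \<Rightarrow> bool) \<Rightarrow> bool" where
  "simple_graph V E \<longleftrightarrow> finite V \<and> (\<forall>u v. E u v \<longrightarrow> u \<in> V \<and> v \<in> V)
     \<and> (\<forall>u v. E u v \<longrightarrow> E v u) \<and> (\<forall>u. \<not> E u u)"

definition walk_in :: "'a set \<Rightarrow> ('a \<Rightarrow> 'a \<Rightarrow> bool) \<Rightarrow> 'a list \<Rightarrow> bool" where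
  "walk_in S E xs \<longleftrightarrow> xs \<noteq> [] \<and> set xs \<subseteq> S \<and>
     (\<forall>i. Suc i < length xs \<longrightarrow> E (xs ! i) (xs ! Suc i))"

definition connected_in :: "'a set \<Rightarrow> ('a \<Rightarrow> 'a \<Rightarrow> bool) \<Rightarrow> bool" where
  "connected_in S E \<longleftrightarrow> (\<forall>u\<in>S. \<forall>v\<in>S. \<exists>xs. walk_in S E xs \<and> hd xs = u \<and> last xs = v)"

definition no_cut_vertex :: "'a set \<Rightarrow> ('a \<Rightarrow> 'a \<Rightarrow> bool) \<Rightarrow> bool" where
  "no_cut_vertex V E \<longleftrightarrow> (\<forall>v\<in>V. connected_in (V - {v}) E)"

definition gdist :: "'a set \<Rightarrow> ('a \<Rightarrow> 'a \<Rightarrow> bool) \<Rightarrow> 'a \<Rightarrow> 'a \<Rightarrow> nat" where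
  "gdist V E u v = (LEAST k. \<exists>xs. walk_in V E xs \<and> hd xs = u \<and> last xs = v \<and> length xs = Suc k)"

definition bfs_tree :: "'a set \<Rightarrow> ('a \<Rightarrow> 'a \<Rightarrow> bool) \<Rightarrow> 'a \<Rightarrow> ('a \<Rightarrow> 'a) \<Rightarrow> bool" where
  "bfs_tree V E s p \<longleftrightarrow> s \<in> V \<and> p s = s \<and>
     (\<forall>v\<in>V - {s}. p v \<in> V \<and> E (p v) v \<and> Suc (gdist V E s (p v)) = gdist V E s v)"

text \<open>T-ancestor (reflexive): a lies on the tree path pi(s,v).\<close>
definition anc :: "('a \<Rightarrow> 'a) \<Rightarrow> 'a \<Rightarrow> 'a \<Rightarrow> bool" where
  "anc p a v \<longleftrightarrow> (\<exists>n. (p ^^ n) v = a)"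

definition tchild :: "'a set \<Rightarrow> 'a \<Rightarrow> ('a \<Rightarrow> 'a) \<Rightarrow> 'a \<Rightarrow> 'a \<Rightarrow> bool" where
  "tchild V s p x c \<longleftrightarrow> c \<in> V \<and> c \<noteq> s \<and> p c = x"

definition VT :: "'a set \<Rightarrow> ('a \<Rightarrow> 'a) \<Rightarrow> 'a \<Rightarrow> 'a set" where
  "VT V p x = {v \<in> V. anc p x v}"

definition Vx :: "'a set \<Rightarrow> ('a \<Rightarrow> 'a) \<Rightarrow> 'a \<Rightarrow> 'a set" where
  "Vx V p x = VT V p x - {x}"

text \<open>hc is a heavy-child function: for every non-leaf x, hc x is a child of x
with largest subtree (ties broken by the fixed function hc).\<close>
definition heavy_child_fun :: "'a set \<Rightarrow> 'a \<Rightarrow> ('a \<Rightarrow> 'a) \<Rightarrow> ('a \<Rightarrow> 'a) \<Rightarrow> bool" where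
  "heavy_child_fun V s p hc \<longleftrightarrow> (\<forall>x\<in>V. (\<exists>c. tchild V s p x c) \<longrightarrow>
      tchild V s p x (hc x) \<and> (\<forall>c. tchild V s p x c \<longrightarrow> card (VT V p c) \<le> card (VT V p (hc x))))"

definition comp_of :: "'a set \<Rightarrow> ('a \<Rightarrow> 'a \<Rightarrow> bool) \<Rightarrow> 'a \<Rightarrow> 'a set" where
  "comp_of S E v = {w. \<exists>xs. walk_in S E xs \<and> hd xs = v \<and> last xs = w}"

definition comps :: "'a set \<Rightarrow> ('a \<Rightarrow> 'a \<Rightarrow> bool) \<Rightarrow> 'a set set" where
  "comps S E = comp_of S E ` S"

definition Hc :: "'a set \<Rightarrow> ('a \<Rightarrow> 'a \<Rightarrow> bool) \<Rightarrow> ('a \<Rightarrow> 'a) \<Rightarrow> ('a \<Rightarrow> 'a) \<Rightarrow> 'a \<Rightarrow> 'a set" where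
  "Hc V E p hc x = comp_of (Vx V p x) E (hc x)"

definition attach_edges :: "'a set \<Rightarrow> ('a \<Rightarrow> 'a \<Rightarrow> bool) \<Rightarrow> 'a \<Rightarrow> ('a \<Rightarrow> 'a)
      \<Rightarrow> ('a \<Rightarrow> 'a set \<Rightarrow> 'a) \<Rightarrow> ('a \<Rightarrow> 'a set \<Rightarrow> 'a) \<Rightarrow> bool" where
  "attach_edges V E s p uC vC \<longleftrightarrow> (\<forall>x\<in>V - {s}. \<forall>C\<in>comps (Vx V p x) E.
      E (uC x C) (vC x C) \<and> vC x C \<in> C \<and> uC x C \<in> V \<and> uC x C \<notin> VT V p x)"

text \<open>Vertex w lies on pi_x(s,C) = pi(s,u_C) o (u_C,v_C).\<close>
definition on_pix :: "('a \<Rightarrow> 'a) \<Rightarrow> ('a \<Rightarrow> 'a set \<Rightarrow> 'a) \<Rightarrow> ('a \<Rightarrow> 'a set \<Rightarrow> 'a)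
      \<Rightarrow> 'a \<Rightarrow> 'a set \<Rightarrow> 'a \<Rightarrow> bool" where
  "on_pix p uC vC x C w \<longleftrightarrow> anc p w (uC x C) \<or> w = vC x C"

text \<open>The T-edge (y,y') (y' a child of y) lies on pi_x(s,C).  (The last edge
(u_C,v_C) is never a T-edge, so only the tree part pi(s,u_C) matters.)\<close>
definition tedge_on_pix :: "'a set \<Rightarrow> 'a \<Rightarrow> ('a \<Rightarrow> 'a) \<Rightarrow> ('a \<Rightarrow> 'a set \<Rightarrow> 'a)
      \<Rightarrow> 'a \<Rightarrow> 'a set \<Rightarrow> 'a \<Rightarrow> 'a \<Rightarrow> bool" where
  "tedge_on_pix V s p uC x C y y' \<longleftrightarrow> tchild V s p y y' \<and> anc p y' (uC x C)"

definition independent :: "('a \<Rightarrow> 'a) \<Rightarrow> 'a \<Rightarrow> 'a \<Rightarrow> bool" where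
  "independent p x y \<longleftrightarrow> \<not> anc p x y \<and> \<not> anc p y x"

definition fully_sensitive :: "'a set \<Rightarrow> ('a \<Rightarrow> 'a \<Rightarrow> bool) \<Rightarrow> 'a \<Rightarrow> ('a \<Rightarrow> 'a)
      \<Rightarrow> ('a \<Rightarrow> 'a set \<Rightarrow> 'a) \<Rightarrow> ('a \<Rightarrow> 'a set \<Rightarrow> 'a) \<Rightarrow> 'a \<Rightarrow> 'a \<Rightarrow> 'a set set" where
  "fully_sensitive V E s p uC vC x y = {C \<in> comps (Vx V p x) E.
      on_pix p uC vC x C y \<and>
      \<not> (\<exists>y'. tedge_on_pix V s p uC x C y y' \<and>
              \<not> on_pix p uC vC y (comp_of (Vx V p y) E y') x)}"

definition ordered_light_pair :: "'a set \<Rightarrow> ('a \<Rightarrow> 'a \<Rightarrow> bool) \<Rightarrow> 'a \<Rightarrow> ('a \<Rightarrow> 'a)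
      \<Rightarrow> ('a \<Rightarrow> 'a) \<Rightarrow> ('a \<Rightarrow> 'a set \<Rightarrow> 'a) \<Rightarrow> ('a \<Rightarrow> 'a set \<Rightarrow> 'a) \<Rightarrow> 'a \<Rightarrow> 'a \<Rightarrow> bool" where
  "ordered_light_pair V E s p hc uC vC x y \<longleftrightarrow>
     (\<exists>C\<in>fully_sensitive V E s p uC vC x y. \<not> tedge_on_pix V s p uC x C y (hc y))"

definition heavy_pair :: "'a set \<Rightarrow> ('a \<Rightarrow> 'a \<Rightarrow> bool) \<Rightarrow> 'a \<Rightarrow> ('a \<Rightarrow> 'a)
      \<Rightarrow> ('a \<Rightarrow> 'a) \<Rightarrow> ('a \<Rightarrow> 'a set \<Rightarrow> 'a) \<Rightarrow> ('a \<Rightarrow> 'a set \<Rightarrow> 'a) \<Rightarrow> 'a \<Rightarrow> 'a \<Rightarrow> bool" where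
  "heavy_pair V E s p hc uC vC x y \<longleftrightarrow> x \<in> V \<and> y \<in> V \<and> independent p x y \<and>
     \<not> ordered_light_pair V E s p hc uC vC x y \<and> \<not> ordered_light_pair V E s p hc uC vC y x"

definition Rset :: "'a set \<Rightarrow> ('a \<Rightarrow> 'a \<Rightarrow> bool) \<Rightarrow> ('a \<Rightarrow> 'a) \<Rightarrow> ('a \<Rightarrow> 'a) \<Rightarrow> 'a \<Rightarrow> 'a set" where
  "Rset V E p hc x = {v \<in> V - VT V p x. \<exists>w\<in>Hc V E p hc x. E v w}"

definition tlca :: "('a \<Rightarrow> 'a) \<Rightarrow> 'a set \<Rightarrow> 'a" where
  "tlca p A = (THE a. (\<forall>v\<in>A. anc p a v) \<and> (\<forall>b. (\<forall>v\<in>A. anc p b v) \<longrightarrow> anc p b a))"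

definition rx :: "'a set \<Rightarrow> ('a \<Rightarrow> 'a \<Rightarrow> bool) \<Rightarrow> ('a \<Rightarrow> 'a) \<Rightarrow> ('a \<Rightarrow> 'a) \<Rightarrow> 'a \<Rightarrow> 'a" where
  "rx V E p hc x = tlca p (Rset V E p hc x)"

definition Chat :: "'a set \<Rightarrow> ('a \<Rightarrow> 'a \<Rightarrow> bool) \<Rightarrow> 'a \<Rightarrow> ('a \<Rightarrow> 'a) \<Rightarrow> ('a \<Rightarrow> 'a)
      \<Rightarrow> ('a \<Rightarrow> 'a set \<Rightarrow> 'a) \<Rightarrow> 'a \<Rightarrow> 'a \<Rightarrow> 'a set" where
  "Chat V E s p hc uC x y = \<Union>{C \<in> comps (Vx V p x) E. tedge_on_pix V s p uC x C y (hc y)}"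

end

theory Submission
  imports Defs
begin

(* Let T be the union of \<widehat>C(x,y) and H_y.  In G - {x,y} every vertex of T is still
   joined to y_h: H_y is the component of G[V_y] containing y_h, and every component C of
   \<widehat>C(x,y) is attached by (u_C,v_C) to a vertex u_C in the subtree of y_h.
   Every vertex outside T is still joined to s: outside T_x and T_y by its tree path, and
   inside a component that is not fully sensitive to the other removed vertex by its
   attachment edge, possibly through the component of the other subtree containing the
   attachment vertex.  A fully sensitive component D \<noteq> H_y of G[V_y] cannot exist: xy is
   heavy, so (x,x_h) lies on \<pi>_y(s,D), hence u_D \<in> H_x and v_D \<in> R(x); then r(x) is an
   ancestor of v_D and of u_{H_x}, which forces v_D \<in> H_y or r(x) = y.
   So G - {x,y} is connected iff some edge leaves T. *)

section \<open>Reachability in induced subgraphs\<close>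

definition induced :: "'a set \<Rightarrow> ('a \<Rightarrow> 'a \<Rightarrow> bool) \<Rightarrow> 'a \<Rightarrow> 'a \<Rightarrow> bool" where
  "induced A E u v \<longleftrightarrow> E u v \<and> u \<in> A \<and> v \<in> A"

lemma walk_in_Cons_Cons:
  "walk_in A E (u # v # xs) \<longleftrightarrow> u \<in> A \<and> E u v \<and> walk_in A E (v # xs)"
  unfolding walk_in_def by (auto simp: less_Suc_eq_0_disj)

lemma walk_in_singleton: "walk_in A E [u] \<longleftrightarrow> u \<in> A"
  by (simp add: walk_in_def)

lemma induced_rtranclp_in: "(induced A E)\<^sup>*\<^sup>* u v \<Longrightarrow> u \<in> A \<Longrightarrow> v \<in> A"
  by (induction rule: rtranclp_induct) (auto simp: induced_def)

lemma comp_of_iff: "v \<in> comp_of A E u \<longleftrightarrow> u \<in> A \<and> (induced A E)\<^sup>*\<^sup>* u v"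
proof
  assume "v \<in> comp_of A E u"
  then obtain xs where "walk_in A E xs" "hd xs = u" "last xs = v"
    by (auto simp: comp_of_def)
  then show "u \<in> A \<and> (induced A E)\<^sup>*\<^sup>* u v"
  proof (induction xs arbitrary: u)
    case (Cons w xs)
    then show ?case
      by (cases xs) (auto simp: walk_in_singleton walk_in_Cons_Cons induced_def
          intro: converse_rtranclp_into_rtranclp)
  qed (simp add: walk_in_def)
next
  assume "u \<in> A \<and> (induced A E)\<^sup>*\<^sup>* u v"
  then have "(induced A E)\<^sup>*\<^sup>* u v" "u \<in> A" by simp_all
  then have "\<exists>xs. walk_in A E xs \<and> hd xs = u \<and> last xs = v"
  proof (induction rule: converse_rtranclp_induct)
    case base
    then show ?case by (intro exI[of _ "[v]"]) (simp add: walk_in_singleton)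
  next
    case (step u w)
    then obtain xs where xs: "walk_in A E xs" "hd xs = w" "last xs = v"
      by (auto simp: induced_def)
    then obtain xs' where "xs = w # xs'" by (cases xs) (auto simp: walk_in_def)
    with xs step.hyps(1) show ?case
      by (intro exI[of _ "u # xs"]) (auto simp: walk_in_Cons_Cons induced_def)
  qed
  then show "v \<in> comp_of A E u" by (simp add: comp_of_def)
qed

lemma connected_in_iff_rtranclp:
  "connected_in A E \<longleftrightarrow> (\<forall>u\<in>A. \<forall>v\<in>A. (induced A E)\<^sup>*\<^sup>* u v)"
  using comp_of_iff[of _ A E] by (auto simp: connected_in_def comp_of_def)

lemma comp_of_subset: "comp_of A E u \<subseteq> A"
  using induced_rtranclp_in by (fastforce simp: comp_of_iff)

lemma comp_of_self: "u \<in> A \<Longrightarrow> u \<in> comp_of A E u"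
  by (simp add: comp_of_iff)

lemma comps_subset: "C \<in> comps A E \<Longrightarrow> C \<subseteq> A"
  by (auto simp: comps_def dest: comp_of_subset[THEN subsetD])

lemma induced_rtranclp_mono:
  assumes "(induced A E)\<^sup>*\<^sup>* u v" "A \<subseteq> B"
  shows "(induced B E)\<^sup>*\<^sup>* u v"
proof -
  have "induced A E \<le> induced B E" using assms(2) by (auto simp: induced_def)
  then show ?thesis using assms(1) by (rule rtranclp_mono[THEN predicate2D])
qed

lemma symp_induced:
  assumes "symp E"
  shows "symp (induced A E)"
proof (rule sympI)
  fix u v assume "induced A E u v"
  then show "induced A E v u" using assms by (simp add: induced_def sympD)
qed

lemma comp_of_rtranclp:
  assumes "symp E" "v \<in> comp_of A E u" "w \<in> comp_of A E u" "A \<subseteq> B"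
  shows "(induced B E)\<^sup>*\<^sup>* v w"
proof -
  have "(induced A E)\<^sup>*\<^sup>* u v" "(induced A E)\<^sup>*\<^sup>* u w"
    using assms(2,3) by (simp_all add: comp_of_iff)
  moreover have "symp (induced A E)\<^sup>*\<^sup>*"
    using symp_rtranclp symp_induced assms(1) by blast
  ultimately have "(induced A E)\<^sup>*\<^sup>* v w"
    by (meson rtranclp_trans sympD)
  then show ?thesis using assms(4) by (rule induced_rtranclp_mono)
qed

lemma comps_rtranclp:
  assumes "symp E" "C \<in> comps A E" "v \<in> C" "w \<in> C" "A \<subseteq> B"
  shows "(induced B E)\<^sup>*\<^sup>* v w"
proof -
  obtain u where "C = comp_of A E u" using assms(2) unfolding comps_def by blast
  then show ?thesis using comp_of_rtranclp[OF assms(1) _ _ assms(5)] assms(3,4) by simp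
qed

lemma comps_eq_comp_of:
  assumes "symp E" "C \<in> comps A E" "v \<in> C"
  shows "C = comp_of A E v"
proof -
  obtain u where C: "C = comp_of A E u" using assms(2) unfolding comps_def by blast
  have uv: "(induced A E)\<^sup>*\<^sup>* u v" and "u \<in> A"
    using assms(3) unfolding C comp_of_iff by blast+
  then have "v \<in> A" by (rule induced_rtranclp_in)
  have "w \<in> C \<longleftrightarrow> w \<in> comp_of A E v" for w
  proof
    assume "w \<in> C"
    then show "w \<in> comp_of A E v"
      using comp_of_rtranclp[OF assms(1) assms(3)[unfolded C] _ order_refl] \<open>v \<in> A\<close>
      unfolding C comp_of_iff by blast
  next
    assume "w \<in> comp_of A E v"
    then show "w \<in> C"
      using uv \<open>u \<in> A\<close> unfolding C comp_of_iff by (blast intro: rtranclp_trans)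
  qed
  then show ?thesis by blast
qed

lemma rtranclp_crossing: "R\<^sup>*\<^sup>* a b \<Longrightarrow> P a \<Longrightarrow> \<not> P b \<Longrightarrow> \<exists>u v. R u v \<and> P u \<and> \<not> P v"
  by (induction rule: rtranclp_induct) auto

lemma connected_in_iff_crossing_edge:
  assumes sym: "symp E"
    and a: "a \<in> S \<inter> T" and b: "b \<in> S - T"
    and reach_T: "\<forall>w\<in>S \<inter> T. (induced S E)\<^sup>*\<^sup>* a w"
    and reach_co_T: "\<forall>w\<in>S - T. (induced S E)\<^sup>*\<^sup>* b w"
  shows "connected_in S E \<longleftrightarrow> (\<exists>u v. E u v \<and> u \<in> S \<and> v \<in> S \<and> (u \<in> T) \<noteq> (v \<in> T))"
proof
  assume "connected_in S E"
  then have "(induced S E)\<^sup>*\<^sup>* a b" using a b by (simp add: connected_in_iff_rtranclp)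
  then obtain u v where "induced S E u v" "u \<in> T" "v \<notin> T"
    using rtranclp_crossing[of _ a b "\<lambda>w. w \<in> T"] a b by blast
  then show "\<exists>u v. E u v \<and> u \<in> S \<and> v \<in> S \<and> (u \<in> T) \<noteq> (v \<in> T)"
    unfolding induced_def by blast
next
  let ?R = "(induced S E)\<^sup>*\<^sup>*"
  have symR: "?R v u" if "?R u v" for u v
    using that sympD[OF symp_rtranclp[OF symp_induced[OF sym]]] by blast
  assume "\<exists>u v. E u v \<and> u \<in> S \<and> v \<in> S \<and> (u \<in> T) \<noteq> (v \<in> T)"
  then obtain u v where "?R u v" "u \<in> S \<inter> T" "v \<in> S - T"
    using symR unfolding induced_def by (blast intro: r_into_rtranclp)
  then have "?R b u"
    using reach_co_T symR by (blast intro: rtranclp_trans)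
  then have "?R b w" if "w \<in> S" for w
    using that reach_T reach_co_T symR \<open>u \<in> S \<inter> T\<close> by (cases "w \<in> T") (blast intro: rtranclp_trans)+
  then show "connected_in S E"
    unfolding connected_in_iff_rtranclp using symR by (blast intro: rtranclp_trans)
qed

section \<open>Ancestors in the BFS tree\<close>

lemma anc_refl: "anc p a a"
  unfolding anc_def by (rule exI[of _ 0]) simp

lemma anc_parent: "anc p (p a) a"
  unfolding anc_def by (rule exI[of _ 1]) simp

lemma anc_trans: "anc p a b \<Longrightarrow> anc p b c \<Longrightarrow> anc p a c"
  unfolding anc_def by (metis comp_apply funpow_add)

lemma anc_funpow_le: "m \<le> n \<Longrightarrow> anc p ((p ^^ n) w) ((p ^^ m) w)"
  unfolding anc_def by (metis comp_apply funpow_add le_add_diff_inverse2)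

lemma anc_linear: "anc p a w \<Longrightarrow> anc p b w \<Longrightarrow> anc p a b \<or> anc p b a"
  unfolding anc_def using anc_funpow_le[unfolded anc_def] by (metis nat_le_linear)

lemma anc_parent_if_ne: "anc p a b \<Longrightarrow> a \<noteq> b \<Longrightarrow> anc p a (p b)"
  unfolding anc_def by (metis funpow_0 comp_apply funpow_Suc_right not0_implies_Suc)

lemma Vx_subset_if_independent: "independent p x y \<Longrightarrow> Vx V p x \<subseteq> V - {x, y}"
  by (auto simp: independent_def Vx_def VT_def)

lemma independent_sym: "independent p x y \<Longrightarrow> independent p y x"
  by (auto simp: independent_def)

lemma Vx_subset_if_independent_swap:
  "independent p x y \<Longrightarrow> Vx V p y \<subseteq> V - {x, y}"
  by (auto simp: independent_def Vx_def VT_def)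

lemma Chat_subset_Vx: "Chat V E s p hc uC x y \<subseteq> Vx V p x"
  by (auto simp: Chat_def dest: comps_subset)

locale bfs_tree_graph =
  fixes V :: "'a set" and E :: "'a \<Rightarrow> 'a \<Rightarrow> bool" and s :: 'a and p :: "'a \<Rightarrow> 'a"
  assumes graph: "simple_graph V E" and bfs: "bfs_tree V E s p"
begin

lemma root_in: "s \<in> V"
  using bfs by (simp add: bfs_tree_def)

lemma parent_root: "p s = s"
  using bfs by (simp add: bfs_tree_def)

lemma parent_in: "v \<in> V \<Longrightarrow> p v \<in> V"
  using bfs parent_root by (cases "v = s") (auto simp: bfs_tree_def)

lemma parent_edge: "v \<in> V \<Longrightarrow> v \<noteq> s \<Longrightarrow> E (p v) v"
  using bfs by (simp add: bfs_tree_def)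

lemma symp_edges: "symp E"
  using graph by (auto simp: simple_graph_def intro: sympI)

lemma gdist_parent_less: "v \<in> V \<Longrightarrow> v \<noteq> s \<Longrightarrow> gdist V E s (p v) < gdist V E s v"
  using bfs unfolding bfs_tree_def by (metis DiffI Suc_le_lessD order_refl singletonD)

lemma funpow_parent_in: "v \<in> V \<Longrightarrow> (p ^^ n) v \<in> V"
  by (induction n) (auto simp: parent_in)

lemma anc_in: "anc p a v \<Longrightarrow> v \<in> V \<Longrightarrow> a \<in> V"
  unfolding anc_def using funpow_parent_in by blast

lemma gdist_anc_le:
  assumes "anc p a v" "v \<in> V"
  shows "gdist V E s a \<le> gdist V E s v"
proof -
  obtain n where "(p ^^ n) v = a" using assms(1) unfolding anc_def by blast
  moreover have "gdist V E s ((p ^^ n) v) \<le> gdist V E s v"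
  proof (induction n)
    case (Suc n)
    have "gdist V E s (p ((p ^^ n) v)) \<le> gdist V E s ((p ^^ n) v)"
      using gdist_parent_less[of "(p ^^ n) v"] funpow_parent_in[OF assms(2)] parent_root
      by (cases "(p ^^ n) v = s") auto
    with Suc show ?case by simp
  qed simp
  ultimately show ?thesis by simp
qed

lemma anc_root: "anc p a s \<Longrightarrow> a = s"
proof -
  have "(p ^^ n) s = s" for n by (induction n) (simp_all add: parent_root)
  then show "anc p a s \<Longrightarrow> a = s" unfolding anc_def by blast
qed

lemma anc_antisym: "anc p a b \<Longrightarrow> anc p b a \<Longrightarrow> b \<in> V \<Longrightarrow> a = b"
proof (rule ccontr)
  assume ab: "anc p a b" and ba: "anc p b a" and b: "b \<in> V" and "a \<noteq> b"
  then have "b \<noteq> s" using anc_root by blast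
  have "anc p b (p b)" using anc_parent_if_ne[OF ab \<open>a \<noteq> b\<close>] ba by (rule anc_trans[rotated])
  then have "gdist V E s b \<le> gdist V E s (p b)" using gdist_anc_le parent_in b by blast
  then show False using gdist_parent_less[OF b \<open>b \<noteq> s\<close>] by simp
qed

lemma root_anc: "v \<in> V \<Longrightarrow> anc p s v"
proof (induction "gdist V E s v" arbitrary: v rule: less_induct)
  case less
  show ?case
  proof (cases "v = s")
    case False
    then have "anc p s (p v)"
      using less.hyps gdist_parent_less[OF less.prems False] parent_in[OF less.prems] by simp
    then show ?thesis using anc_parent by (rule anc_trans)
  qed (simp add: anc_refl)
qed

lemma root_notin_Vx: "s \<notin> Vx V p x"
  using anc_root by (auto simp: Vx_def VT_def)

lemma tchild_in_Vx: "tchild V s p y c \<Longrightarrow> c \<in> Vx V p y"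
  using anc_parent[of p c] gdist_parent_less[of c] by (auto simp: tchild_def Vx_def VT_def)

lemma independent_ne_root:
  assumes "independent p x y" "x \<in> V" "y \<in> V"
  shows "x \<noteq> s" "y \<noteq> s"
  using assms root_anc by (auto simp: independent_def)

lemma tree_path_rtranclp:
  assumes "anc p c w" "w \<in> V" "\<forall>u. anc p c u \<and> anc p u w \<longrightarrow> u \<in> A"
  shows "(induced A E)\<^sup>*\<^sup>* c w"
proof -
  obtain n where "(p ^^ n) w = c" using assms(1) unfolding anc_def by blast
  then show ?thesis using assms(2,3)
  proof (induction n arbitrary: w)
    case (Suc n)
    have "(p ^^ n) (p w) = c" using Suc.prems(1) by (simp add: funpow_swap1)
    then have c_pw: "anc p c (p w)" unfolding anc_def by blast
    have "\<forall>u. anc p c u \<and> anc p u (p w) \<longrightarrow> u \<in> A"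
      using Suc.prems(3) anc_trans[OF _ anc_parent[of p w]] by blast
    then have IH: "(induced A E)\<^sup>*\<^sup>* c (p w)"
      using Suc.IH[OF \<open>(p ^^ n) (p w) = c\<close> parent_in[OF Suc.prems(2)]] by blast
    show ?case
    proof (cases "w = s")
      case False
      have "p w \<in> A" using Suc.prems(3) c_pw anc_parent[of p w] by blast
      moreover have "w \<in> A"
        using Suc.prems(3) anc_trans[OF c_pw anc_parent] anc_refl[of p w] by blast
      ultimately
      have "induced A E (p w) w"
        using parent_edge[OF Suc.prems(2) False] unfolding induced_def by blast
      with IH show ?thesis by simp
    qed (use IH parent_root in simp)
  qed simp
qed

lemma comp_of_Vx_if_anc:
  assumes "y \<in> V" "c \<in> Vx V p y" "anc p c w" "w \<in> V"
  shows "w \<in> comp_of (Vx V p y) E c"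
proof -
  have yc: "anc p y c" "c \<noteq> y" using assms(2) by (auto simp: Vx_def VT_def)
  have "u \<in> Vx V p y" if "anc p c u" "anc p u w" for u
  proof -
    have "u \<in> V" using anc_in that(2) assms(4) .
    moreover have "anc p y u" using anc_trans[OF yc(1) that(1)] .
    moreover have "u \<noteq> y" using anc_antisym[OF _ yc(1) assms(1)] yc(2) that(1) by blast
    ultimately show ?thesis by (simp add: Vx_def VT_def)
  qed
  then have "(induced (Vx V p y) E)\<^sup>*\<^sup>* c w"
    using tree_path_rtranclp assms(3,4) by blast
  then show ?thesis using assms(2) by (simp add: comp_of_iff)
qed

lemma root_rtranclp_avoiding:
  assumes "v \<in> V" "\<forall>z\<in>X. \<not> anc p z v"
  shows "(induced (V - X) E)\<^sup>*\<^sup>* s v"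
proof (rule tree_path_rtranclp[OF root_anc[OF assms(1)] assms(1)], intro allI impI)
  fix u assume "anc p s u \<and> anc p u v"
  then show "u \<in> V - X" using assms anc_in by blast
qed

lemma tlca_anc:
  assumes "A \<subseteq> V" "v0 \<in> A"
  shows "\<forall>v\<in>A. anc p (tlca p A) v"
proof -
  let ?common = "\<lambda>a. \<forall>v\<in>A. anc p a v"
  let ?lowest = "\<lambda>a. ?common a \<and> (\<forall>b. ?common b \<longrightarrow> anc p b a)"
  obtain n where "(p ^^ n) v0 = s" using root_anc assms unfolding anc_def by blast
  then have ex: "\<exists>n. ?common ((p ^^ n) v0)"
    using root_anc assms(1) by (intro exI[of _ n]) auto
  define n0 where "n0 = (LEAST n. ?common ((p ^^ n) v0))"
  have lowest: "?lowest ((p ^^ n0) v0)"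
  proof (intro conjI allI impI)
    show "?common ((p ^^ n0) v0)" unfolding n0_def using ex by (rule LeastI_ex)
  next
    fix b assume "?common b"
    then obtain m where m: "(p ^^ m) v0 = b" using assms(2) unfolding anc_def by blast
    have "n0 \<le> m" unfolding n0_def by (rule Least_le) (use m \<open>?common b\<close> in simp)
    then show "anc p b ((p ^^ n0) v0)" using anc_funpow_le[of n0 m p v0] m by simp
  qed
  moreover have "a = (p ^^ n0) v0" if "?lowest a" for a
  proof (rule anc_antisym)
    show "anc p a ((p ^^ n0) v0)" "anc p ((p ^^ n0) v0) a"
      using that lowest by blast+
    show "(p ^^ n0) v0 \<in> V" using assms funpow_parent_in by blast
  qed
  ultimately have "?lowest (tlca p A)"
    unfolding tlca_def by (rule theI)
  then show ?thesis by blast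
qed

lemma anc_rx: "v \<in> Rset V E p hc x \<Longrightarrow> anc p (rx V E p hc x) v"
  using tlca_anc[of "Rset V E p hc x" v] by (auto simp: rx_def Rset_def)

end

section \<open>Attachment edges and heavy pairs\<close>

locale attached_bfs_tree = bfs_tree_graph +
  fixes uC vC :: "'a \<Rightarrow> 'a set \<Rightarrow> 'a"
  assumes attach: "attach_edges V E s p uC vC"
begin

lemma attach_edge:
  assumes "x \<in> V" "x \<noteq> s" "C \<in> comps (Vx V p x) E"
  shows "E (uC x C) (vC x C)" "vC x C \<in> C" "uC x C \<in> V" "\<not> anc p x (uC x C)"
  using attach assms by (auto simp: attach_edges_def VT_def)

lemma comps_rtranclp_via_attach_edge:
  assumes "x \<in> V" "x \<noteq> s" "C \<in> comps (Vx V p x) E" "Vx V p x \<subseteq> W"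
    and "(induced W E)\<^sup>*\<^sup>* r (uC x C)" "r \<in> W" "z \<in> C"
  shows "(induced W E)\<^sup>*\<^sup>* r z"
proof -
  note edge = attach_edge[OF assms(1-3)]
  have "vC x C \<in> W" using edge(2) comps_subset[OF assms(3)] assms(4) by blast
  moreover have "uC x C \<in> W" using induced_rtranclp_in assms(5,6) .
  ultimately have "induced W E (uC x C) (vC x C)" using edge(1) by (simp add: induced_def)
  with assms(5) have "(induced W E)\<^sup>*\<^sup>* r (vC x C)" by simp
  moreover have "(induced W E)\<^sup>*\<^sup>* (vC x C) z"
    using comps_rtranclp[OF symp_edges assms(3) edge(2) assms(7,4)] .
  ultimately show ?thesis by (rule rtranclp_trans)
qed

lemma comps_rtranclp_root_if_not_fully_sensitive:
  assumes "x \<in> V" "y \<in> V" "independent p x y"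
    and "C \<in> comps (Vx V p x) E" "C \<notin> fully_sensitive V E s p uC vC x y" "z \<in> C"
  shows "(induced (V - {x, y}) E)\<^sup>*\<^sup>* s z"
proof -
  let ?W = "V - {x, y}"
  have "x \<noteq> s" "y \<noteq> s" using independent_ne_root[OF assms(3,1,2)] by simp_all
  have Vx_W: "Vx V p x \<subseteq> ?W" and Vy_W: "Vx V p y \<subseteq> ?W"
    using Vx_subset_if_independent[OF assms(3)] Vx_subset_if_independent_swap[OF assms(3)] .
  have s_W: "s \<in> ?W" using root_in \<open>x \<noteq> s\<close> \<open>y \<noteq> s\<close> by simp
  note edge = attach_edge[OF assms(1) \<open>x \<noteq> s\<close> assms(4)]
  have "(induced ?W E)\<^sup>*\<^sup>* s (uC x C)"
  proof (cases "anc p y (uC x C)")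
    case False
    then show ?thesis using root_rtranclp_avoiding[of "uC x C" "{x, y}"] edge(3,4) by blast
  next
    case True
    \<comment> \<open>the component of G[V_y] entered by \<pi>_x(s,C) contains u_C and is attached avoiding x\<close>
    then obtain y' where y': "tedge_on_pix V s p uC x C y y'"
      and x_off: "\<not> on_pix p uC vC y (comp_of (Vx V p y) E y') x"
      using assms(4,5) by (auto simp: fully_sensitive_def on_pix_def)
    define D where "D = comp_of (Vx V p y) E y'"
    have y'_in: "y' \<in> Vx V p y" using y' tchild_in_Vx by (auto simp: tedge_on_pix_def)
    have D: "D \<in> comps (Vx V p y) E" using y'_in by (simp add: D_def comps_def)
    note edge_D = attach_edge[OF assms(2) \<open>y \<noteq> s\<close> D]
    have "\<not> anc p x (uC y D)" using x_off by (simp add: on_pix_def D_def)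
    then have "(induced ?W E)\<^sup>*\<^sup>* s (uC y D)"
      using root_rtranclp_avoiding[of "uC y D" "{x, y}"] edge_D(3,4) by blast
    moreover have "uC x C \<in> D"
      using comp_of_Vx_if_anc[OF assms(2) y'_in] y' edge(3) by (simp add: D_def tedge_on_pix_def)
    ultimately show ?thesis
      using comps_rtranclp_via_attach_edge[OF assms(2) \<open>y \<noteq> s\<close> D Vy_W _ s_W] by blast
  qed
  then show ?thesis
    using comps_rtranclp_via_attach_edge[OF assms(1) \<open>x \<noteq> s\<close> assms(4) Vx_W _ s_W assms(6)] by blast
qed

lemma comps_rtranclp_child_if_tedge_on_pix:
  assumes "x \<in> V" "y \<in> V" "independent p x y"
    and "C \<in> comps (Vx V p x) E" "tedge_on_pix V s p uC x C y y'" "z \<in> C"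
  shows "(induced (V - {x, y}) E)\<^sup>*\<^sup>* y' z"
proof -
  let ?W = "V - {x, y}"
  have "x \<noteq> s" using independent_ne_root[OF assms(3,1,2)] by simp
  have Vx_W: "Vx V p x \<subseteq> ?W" and Vy_W: "Vx V p y \<subseteq> ?W"
    using Vx_subset_if_independent[OF assms(3)] Vx_subset_if_independent_swap[OF assms(3)] .
  have y'_in: "y' \<in> Vx V p y" using assms(5) tchild_in_Vx by (auto simp: tedge_on_pix_def)
  have "uC x C \<in> comp_of (Vx V p y) E y'"
    using comp_of_Vx_if_anc[OF assms(2) y'_in] assms(5) attach_edge(3)[OF assms(1) \<open>x \<noteq> s\<close> assms(4)]
    by (simp add: tedge_on_pix_def)
  then have "(induced ?W E)\<^sup>*\<^sup>* y' (uC x C)"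
    using comp_of_rtranclp[OF symp_edges comp_of_self[OF y'_in] _ Vy_W] by blast
  then show ?thesis
    using comps_rtranclp_via_attach_edge[OF assms(1) \<open>x \<noteq> s\<close> assms(4) Vx_W] y'_in Vy_W assms(6)
    by blast
qed

lemma Hc_attach_in_Rset:
  assumes "x \<in> V" "x \<noteq> s" "hc x \<in> Vx V p x"
  shows "uC x (Hc V E p hc x) \<in> Rset V E p hc x"
proof -
  have "Hc V E p hc x \<in> comps (Vx V p x) E" using assms(3) by (simp add: Hc_def comps_def)
  then show ?thesis using attach_edge[OF assms(1,2)] by (auto simp: Rset_def VT_def)
qed

lemma attach_in_Rset_if_heavy_tedge:
  assumes "x \<in> V" "y \<in> V" "independent p x y"
    and "D \<in> comps (Vx V p y) E" "tedge_on_pix V s p uC y D x (hc x)"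
  shows "vC y D \<in> Rset V E p hc x"
proof -
  have "y \<noteq> s" using independent_ne_root[OF assms(3,1,2)] by simp
  note edge = attach_edge[OF assms(2) this assms(4)]
  have "hc x \<in> Vx V p x" "anc p (hc x) (uC y D)"
    using assms(5) tchild_in_Vx by (auto simp: tedge_on_pix_def)
  then have u_Hx: "uC y D \<in> Hc V E p hc x"
    using comp_of_Vx_if_anc[OF assms(1)] edge(3) by (simp add: Hc_def)
  have v_Vy: "vC y D \<in> Vx V p y" using edge(2) comps_subset[OF assms(4)] by blast
  then have "\<not> anc p x (vC y D)"
    using assms(3) anc_linear[of p x "vC y D" y] by (auto simp: independent_def Vx_def VT_def)
  then show ?thesis
    using u_Hx v_Vy edge(1) sympD[OF symp_edges] by (auto simp: Rset_def VT_def Vx_def)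
qed

lemma comps_eq_Hc_if_heavy_tedge:
  assumes "x \<in> V" "y \<in> V" "independent p x y"
    and "D \<in> comps (Vx V p y) E" "tedge_on_pix V s p uC y D x (hc x)"
    and "anc p y (rx V E p hc x)" "y \<noteq> rx V E p hc x"
    and "tedge_on_pix V s p uC x (Hc V E p hc x) y (hc y)"
  shows "D = Hc V E p hc y"
proof -
  let ?r = "rx V E p hc x" and ?uHx = "uC x (Hc V E p hc x)" and ?v = "vC y D"
  have "x \<noteq> s" "y \<noteq> s" using independent_ne_root[OF assms(3,1,2)] by simp_all
  have "hc x \<in> Vx V p x" using assms(5) tchild_in_Vx by (auto simp: tedge_on_pix_def)
  then have r_uHx: "anc p ?r ?uHx" using anc_rx Hc_attach_in_Rset assms(1) \<open>x \<noteq> s\<close> by blast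
  have r_v: "anc p ?r ?v"
    using anc_rx attach_in_Rset_if_heavy_tedge[where hc = hc, OF assms(1-5)] by blast
  have hy_uHx: "anc p (hc y) ?uHx" and hy: "tchild V s p y (hc y)"
    using assms(8) by (auto simp: tedge_on_pix_def)
  show ?thesis
  proof (cases "anc p (hc y) ?r")
    case True
    have hy_in: "hc y \<in> Vx V p y" using tchild_in_Vx[OF hy] .
    have v_Vy: "?v \<in> Vx V p y"
      using attach_edge(2)[OF assms(2) \<open>y \<noteq> s\<close> assms(4)] comps_subset[OF assms(4)] by blast
    have "?v \<in> Hc V E p hc y"
      using comp_of_Vx_if_anc[OF assms(2) hy_in anc_trans[OF True r_v]] v_Vy
      by (simp add: Hc_def Vx_def VT_def)
    moreover have "Hc V E p hc y \<in> comps (Vx V p y) E" using hy_in by (simp add: Hc_def comps_def)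
    ultimately show ?thesis
      using comps_eq_comp_of[OF symp_edges] assms(4) attach_edge(2)[OF assms(2) \<open>y \<noteq> s\<close> assms(4)]
      by metis
  next
    case False
    then have "anc p ?r (hc y)" "?r \<noteq> hc y"
      using anc_linear[OF r_uHx hy_uHx] by (auto simp: anc_refl)
    then have "anc p ?r y" using anc_parent_if_ne hy by (fastforce simp: tchild_def)
    then show ?thesis using anc_antisym[OF _ assms(6,2)] assms(7) by blast
  qed
qed

lemma rtranclp_root_if_notin_Chat_Hc:
  assumes hp: "heavy_pair V E s p hc uC vC x y"
    and "anc p y (rx V E p hc x)" "y \<noteq> rx V E p hc x"
    and "tedge_on_pix V s p uC x (Hc V E p hc x) y (hc y)"
    and w: "w \<in> V - {x, y}" "w \<notin> Chat V E s p hc uC x y \<union> Hc V E p hc y"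
  shows "(induced (V - {x, y}) E)\<^sup>*\<^sup>* s w"
proof -
  have x: "x \<in> V" and y: "y \<in> V" and ind: "independent p x y"
    and not_light_xy: "\<not> ordered_light_pair V E s p hc uC vC x y"
    and not_light_yx: "\<not> ordered_light_pair V E s p hc uC vC y x"
    using hp by (auto simp: heavy_pair_def)
  consider "anc p x w" | "anc p y w" | "\<forall>z\<in>{x, y}. \<not> anc p z w" by blast
  then show ?thesis
  proof cases
    case 1
    define C where "C = comp_of (Vx V p x) E w"
    have "w \<in> Vx V p x" using 1 w(1) by (auto simp: Vx_def VT_def)
    then have C: "C \<in> comps (Vx V p x) E" "w \<in> C" by (auto simp: C_def comps_def comp_of_self)
    then have "\<not> tedge_on_pix V s p uC x C y (hc y)" using w(2) by (auto simp: Chat_def)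
    then have "C \<notin> fully_sensitive V E s p uC vC x y"
      using not_light_xy by (auto simp: ordered_light_pair_def)
    then show ?thesis
      using comps_rtranclp_root_if_not_fully_sensitive[OF x y ind C(1) _ C(2)] by blast
  next
    case 2
    define D where "D = comp_of (Vx V p y) E w"
    have "w \<in> Vx V p y" using 2 w(1) by (auto simp: Vx_def VT_def)
    then have D: "D \<in> comps (Vx V p y) E" "w \<in> D" by (auto simp: D_def comps_def comp_of_self)
    have "D \<noteq> Hc V E p hc y" using D(2) w(2) by blast
    then have "\<not> tedge_on_pix V s p uC y D x (hc x)"
      using comps_eq_Hc_if_heavy_tedge[OF x y ind D(1) _ assms(2-4)] by blast
    then have "D \<notin> fully_sensitive V E s p uC vC y x"
      using not_light_yx by (auto simp: ordered_light_pair_def)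
    then have "(induced (V - {y, x}) E)\<^sup>*\<^sup>* s w"
      using comps_rtranclp_root_if_not_fully_sensitive[OF y x independent_sym[OF ind] D(1) _ D(2)]
      by blast
    then show ?thesis by (simp add: insert_commute)
  next
    case 3
    then show ?thesis using root_rtranclp_avoiding w(1) by blast
  qed
qed

lemma rtranclp_heavy_child_if_in_Chat_Hc:
  assumes "x \<in> V" "y \<in> V" "independent p x y"
    and "w \<in> Chat V E s p hc uC x y \<union> Hc V E p hc y"
  shows "(induced (V - {x, y}) E)\<^sup>*\<^sup>* (hc y) w"
proof (cases "w \<in> Hc V E p hc y")
  case True
  then have hy: "hc y \<in> Vx V p y" and "w \<in> comp_of (Vx V p y) E (hc y)"
    by (simp_all add: Hc_def comp_of_iff)
  then show ?thesis
    using comp_of_rtranclp[OF symp_edges comp_of_self[OF hy]]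
      Vx_subset_if_independent_swap[OF assms(3)] by blast
next
  case False
  then obtain C where "C \<in> comps (Vx V p x) E" "tedge_on_pix V s p uC x C y (hc y)" "w \<in> C"
    using assms(4) by (auto simp: Chat_def)
  then show ?thesis using comps_rtranclp_child_if_tedge_on_pix[OF assms(1-3)] by blast
qed

end

theorem claim4p25:
  fixes V :: "'a set" and E :: "'a \<Rightarrow> 'a \<Rightarrow> bool" and s :: 'a
    and p hc :: "'a \<Rightarrow> 'a" and uC vC :: "'a \<Rightarrow> 'a set \<Rightarrow> 'a" and x y :: 'a
  assumes graph: "simple_graph V E"
    and conn: "connected_in V E"
    and ncv: "no_cut_vertex V E"
    and bfs: "bfs_tree V E s p"
    and heavy: "heavy_child_fun V s p hc"
    and att: "attach_edges V E s p uC vC"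
    and hp: "heavy_pair V E s p hc uC vC x y"
    and above: "anc p y (rx V E p hc x)" "y \<noteq> rx V E p hc x"
    and onpath: "anc p y (uC x (Hc V E p hc x))"
    and hedge: "tedge_on_pix V s p uC x (Hc V E p hc x) y (hc y)"
  shows "connected_in (V - {x, y}) E \<longleftrightarrow>
    (\<exists>u v. E u v \<and> u \<in> V - {x, y} \<and> v \<in> V - {x, y} \<and>
       (u \<in> Chat V E s p hc uC x y \<union> Hc V E p hc y) \<noteq> (v \<in> Chat V E s p hc uC x y \<union> Hc V E p hc y))"
proof -
  interpret attached_bfs_tree V E s p uC vC
    using graph bfs att by unfold_locales
  let ?W = "V - {x, y}" and ?T = "Chat V E s p hc uC x y \<union> Hc V E p hc y"
  have x: "x \<in> V" and y: "y \<in> V" and ind: "independent p x y"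
    using hp by (auto simp: heavy_pair_def)
  have "hc y \<in> Vx V p y" using hedge tchild_in_Vx by (auto simp: tedge_on_pix_def)
  then have "hc y \<in> ?W \<inter> ?T"
    using Vx_subset_if_independent_swap[OF ind] comp_of_self[of "hc y" "Vx V p y" E]
    by (auto simp: Hc_def)
  moreover have "s \<in> ?W - ?T"
    using root_in independent_ne_root[OF ind x y] root_notin_Vx[of x] root_notin_Vx[of y]
      Chat_subset_Vx[of V E s p hc uC x y] comp_of_subset[of "Vx V p y" E "hc y"]
    by (auto simp: Hc_def)
  ultimately show ?thesis
  proof (rule connected_in_iff_crossing_edge[OF symp_edges])
    show "\<forall>w\<in>?W \<inter> ?T. (induced ?W E)\<^sup>*\<^sup>* (hc y) w"
      using rtranclp_heavy_child_if_in_Chat_Hc[OF x y ind] by blast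
    show "\<forall>w\<in>?W - ?T. (induced ?W E)\<^sup>*\<^sup>* s w"
      using rtranclp_root_if_notin_Chat_Hc[OF hp above hedge] by blast
  qed
qed

end
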